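(* For $T>0$ and $x\in[0,1]$ let $$I(x) = \frac{2x}{\pi}\int_{-T}^{T}\frac{e^s}{e^{2s}+x}\,ds.$$ Then for every $T>0$ and every $x\in[0,1]$, $$|\sqrt{x}-I(x)| < \frac{4}{\pi}e^{-T} < \frac32 e^{-T}.$$ *)

theory Defs
  imports "HOL-Analysis.Analysis"
begin

definition I_approx :: "real \<Rightarrow> real \<Rightarrow> real" where
  "I_approx T x = (2 * x / pi) * integral {-T..T} (\<lambda>s. exp s / (exp (2 * s) + x))"

end

theory Submission
  imports Defs
begin

text \<open>The substitution \<open>u = e\<^sup>s / \<surd>x\<close> gives the antiderivative
  \<open>arctan (e\<^sup>s / \<surd>x) / \<surd>x\<close>, and \<open>arctan (1/y) = \<pi>/2 - arctan y\<close> turns the integral into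
  \<open>\<surd>x - I(x) = (2/\<pi>) \<surd>x (arctan (e\<^sup>-\<^sup>T \<surd>x) + arctan (e\<^sup>-\<^sup>T / \<surd>x))\<close>.
  This is positive, and \<open>arctan y < y\<close> bounds it by \<open>(2/\<pi>) (x e\<^sup>-\<^sup>T + e\<^sup>-\<^sup>T) \<le> (4/\<pi>) e\<^sup>-\<^sup>T\<close>.\<close>

lemma arctan_less_self:
  fixes y :: real
  assumes "0 < y"
  shows "arctan y < y"
proof -
  obtain z where z: "0 < z" "arctan y - arctan 0 = (y - 0) * inverse (1 + z\<^sup>2)"
    using MVT2[OF assms, of arctan "\<lambda>z. inverse (1 + z\<^sup>2)"] DERIV_arctan by blast
  have "inverse (1 + z\<^sup>2) < 1"
    using \<open>0 < z\<close> by (simp add: inverse_less_1_iff)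
  with z assms show ?thesis
    by (simp add: mult_less_cancel_left1)
qed

lemma has_real_derivative_arctan_divide:
  fixes c u :: real
  assumes "0 < c"
  shows "((\<lambda>u. arctan (u / c) / c) has_real_derivative 1 / (u\<^sup>2 + c\<^sup>2)) (at u)"
proof -
  have "((\<lambda>u. arctan (u / c) / c) has_real_derivative inverse (1 + (u / c)\<^sup>2) * (1 / c) / c) (at u)"
    using assms by (auto intro!: derivative_eq_intros)
  moreover have "inverse (1 + (u / c)\<^sup>2) = c\<^sup>2 / (u\<^sup>2 + c\<^sup>2)"
    using assms by (simp add: field_simps power_divide add_nonneg_pos)
  ultimately show ?thesis
    using assms by (simp add: power2_eq_square)
qed

lemma has_integral_exp_divide_exp_double_plus_square:
  fixes a b c :: real
  assumes "a \<le> b" and "0 < c"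
  shows "((\<lambda>s. exp s / (exp (2 * s) + c\<^sup>2))
           has_integral (arctan (exp b / c) - arctan (exp a / c)) / c) {a..b}"
proof -
  let ?F = "\<lambda>s. arctan (exp s / c) / c"
  have "(?F has_real_derivative exp s / (exp (2 * s) + c\<^sup>2)) (at s)" for s
    using DERIV_chain2[OF has_real_derivative_arctan_divide[OF \<open>0 < c\<close>] DERIV_exp]
    by (simp add: exp_double)
  then have "((\<lambda>s. exp s / (exp (2 * s) + c\<^sup>2)) has_integral ?F b - ?F a) {a..b}"
    using \<open>a \<le> b\<close>
    by (intro fundamental_theorem_of_calculus)
       (auto simp: has_real_derivative_iff_has_vector_derivative[symmetric]
             intro: has_field_derivative_at_within)
  then show ?thesis
    by (simp add: diff_divide_distrib)
qed

lemma sqrt_minus_I_approx: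
  fixes T x :: real
  assumes "0 \<le> T" and "0 < x"
  shows "sqrt x - I_approx T x
           = 2 / pi * sqrt x * (arctan (exp (- T) * sqrt x) + arctan (exp (- T) / sqrt x))"
proof -
  define r where "r = sqrt x"
  define e where "e = exp (- T)"
  have "0 < r" "0 < e" and x: "x = r\<^sup>2"
    using assms by (simp_all add: r_def e_def)
  have "arctan (exp T / r) = pi / 2 - arctan (e * r)"
    using arctan_inverse[of "e * r"] \<open>0 < r\<close> \<open>0 < e\<close> by (simp add: e_def exp_minus field_simps)
  moreover have "integral {-T..T} (\<lambda>s. exp s / (exp (2 * s) + x))
                   = (arctan (exp T / r) - arctan (e / r)) / r"
    using has_integral_exp_divide_exp_double_plus_square[of "- T" T r] assms \<open>0 < r\<close>
    by (simp add: x e_def integral_unique)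
  ultimately have "I_approx T x = 2 * r / pi * (pi / 2 - arctan (e * r) - arctan (e / r))"
    using \<open>0 < r\<close> by (simp add: I_approx_def x power2_eq_square)
  then show ?thesis
    by (simp add: r_def [symmetric] e_def [symmetric] field_simps)
qed

lemma arctan_sum_error_bounds:
  fixes e r :: real
  assumes "0 < e" and "0 < r" and "r \<le> 1"
  shows "0 < r * (arctan (e * r) + arctan (e / r))"
    and "r * (arctan (e * r) + arctan (e / r)) < 2 * e"
proof -
  show "0 < r * (arctan (e * r) + arctan (e / r))"
    using assms by (simp add: add_pos_pos)
  have "r * arctan (e * r) < r * (e * r)"
    using assms by (intro mult_strict_left_mono arctan_less_self) simp_all
  also have "\<dots> \<le> e"
    using assms mult_left_le[of "r * r" e] mult_le_one[of r r] by (simp add: algebra_simps)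
  finally have "r * arctan (e * r) < e" .
  moreover have "r * arctan (e / r) < r * (e / r)"
    using assms by (intro mult_strict_left_mono arctan_less_self) simp_all
  ultimately show "r * (arctan (e * r) + arctan (e / r)) < 2 * e"
    using \<open>0 < r\<close> by (simp add: distrib_left)
qed

theorem lemmaA1:
  fixes T x :: real
  assumes "T > 0" and "0 \<le> x" and "x \<le> 1"
  shows "\<bar>sqrt x - I_approx T x\<bar> < (4 / pi) * exp (- T)
         \<and> (4 / pi) * exp (- T) < (3 / 2) * exp (- T)"
proof
  show "(4 / pi) * exp (- T) < (3 / 2) * exp (- T)"
    using pi_gt3 by (simp add: field_simps)
  show "\<bar>sqrt x - I_approx T x\<bar> < (4 / pi) * exp (- T)"
  proof (cases "x = 0")
    case True
    then show ?thesis
      by (simp add: I_approx_def)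
  next
    case False
    let ?D = "sqrt x * (arctan (exp (- T) * sqrt x) + arctan (exp (- T) / sqrt x))"
    have "0 < ?D" "?D < 2 * exp (- T)"
      using arctan_sum_error_bounds[of "exp (- T)" "sqrt x"] False assms by simp_all
    moreover have "sqrt x - I_approx T x = 2 / pi * ?D"
      using sqrt_minus_I_approx[of T x] False assms by simp
    ultimately have "\<bar>sqrt x - I_approx T x\<bar> = 2 / pi * ?D"
      by simp
    also have "\<dots> < 2 / pi * (2 * exp (- T))"
      using \<open>?D < 2 * exp (- T)\<close> by (intro mult_strict_left_mono) simp_all
    finally show ?thesis
      by simp
  qed
qed

end
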